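(* Let $X_1,X_2,\dots$ be i.i.d. from a finite mixture $P=\sum_{j=1}^tp_jR_j$ with $t\in\mathbb{N}$, distinct probability measures $R_j$ and weights $p_j\in(0,1)$ summing to one, and let $P^{(\infty)}$ be their joint law. Consider the Dirichlet process mixture model with prior $\pi$ on the concentration parameter satisfying A1 and A2. If $\mathrm{pr}(K_n=t\mid X_{1:n})\to1$ in $P^{(\infty)}$-probability, then the posterior distribution $\pi(\alpha\mid X_{1:n})$ of the concentration parameter converges weakly to $\delta_0$, in $P^{(\infty)}$-probability, as $n\to\infty$.
   Context: Model: given a kernel density $k(\cdot\mid\theta)$ and a base probability measure $Q_0$ with density $q_0$: $\alpha\sim\pi$, $\tilde P\mid\alpha\sim\mathrm{DP}(\alpha,Q_0)$, $\theta_i\mid\tilde P$ i.i.d. $\tilde P$, $X_i\mid\theta_i\sim k(\cdot\mid\theta_i)$ independently. $K_n$ is the number of distinct values among $\theta_1,\dots,\theta_n$; $\mathrm{pr}(\cdot\mid X_{1:n})$ and $\pi(\alpha\mid X_{1:n})$ denote posteriors under this model. Explicitly, with $\tau_s(n)$ the partitions of $\{1,\dots,n\}$ into $s$ nonempty blocks, $a_j=|A_j|$, $\alpha^{(n)}=\alpha(\alpha+1)\cdots(\alpha+n-1)$, $m(x_B)=\int\prod_{i\in B}k(x_i\mid\theta)q_0(\theta)d\theta$: $\pi(d\alpha\mid X_{1:n})\propto\pi(d\alpha)\sum_{s=1}^n\frac{\alpha^s}{\alpha^{(n)}}\sum_{A\in\tau_s(n)}\prod_j(a_j-1)!\,m(X_{A_j})$.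 (A1) $\pi$ has a Lebesgue density, also denoted $\pi$; (A2) there exist $\epsilon,\delta,\beta$ with $\frac1\delta\alpha^\beta\le\pi(\alpha)\le\delta\alpha^\beta$ for all $\alpha\in(0,\epsilon)$. *)

theory Defs
  imports "HOL-Probability.Probability" "HOL-Library.Disjoint_Sets"
begin

text \<open>Data indices are 0,...,n-1 (i.e. X_{1:n} is x 0, ..., x (n-1)).
  The kernel is k x th = k(x | th); the base measure Q0 has density q0
  with respect to a dominating measure mu on the parameter space.\<close>

definition tau :: "nat \<Rightarrow> nat \<Rightarrow> nat set set set" where
  "tau s n = {P. partition_on {..<n} P \<and> card P = s}"

definition marg :: "('a \<Rightarrow> 'b \<Rightarrow> real) \<Rightarrow> 'b measure \<Rightarrow> ('b \<Rightarrow> real)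
    \<Rightarrow> (nat \<Rightarrow> 'a) \<Rightarrow> nat set \<Rightarrow> real" where
  "marg k mu q0 x B = (\<integral>th. (\<Prod>i\<in>B. k (x i) th) * q0 th \<partial>mu)"

text \<open>Unnormalised joint posterior weight of (alpha, K_n = s):
  alpha^s / alpha^(n) * sum over partitions with s blocks.\<close>
definition likK :: "('a \<Rightarrow> 'b \<Rightarrow> real) \<Rightarrow> 'b measure \<Rightarrow> ('b \<Rightarrow> real)
    \<Rightarrow> nat \<Rightarrow> (nat \<Rightarrow> 'a) \<Rightarrow> nat \<Rightarrow> real \<Rightarrow> real" where
  "likK k mu q0 n x s \<alpha> = \<alpha> ^ s / pochhammer \<alpha> n *
     (\<Sum>A\<in>tau s n. \<Prod>B\<in>A. fact (card B - 1) * marg k mu q0 x B)"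

definition lik :: "('a \<Rightarrow> 'b \<Rightarrow> real) \<Rightarrow> 'b measure \<Rightarrow> ('b \<Rightarrow> real)
    \<Rightarrow> nat \<Rightarrow> (nat \<Rightarrow> 'a) \<Rightarrow> real \<Rightarrow> real" where
  "lik k mu q0 n x \<alpha> = (\<Sum>s=1..n. likK k mu q0 n x s \<alpha>)"

definition evidence :: "(real \<Rightarrow> real) \<Rightarrow> ('a \<Rightarrow> 'b \<Rightarrow> real) \<Rightarrow> 'b measure
    \<Rightarrow> ('b \<Rightarrow> real) \<Rightarrow> nat \<Rightarrow> (nat \<Rightarrow> 'a) \<Rightarrow> real" where
  "evidence pri k mu q0 n x =
     (LINT \<alpha>:{0<..}|lborel. pri \<alpha> * lik k mu q0 n x \<alpha>)"

definition postK :: "(real \<Rightarrow> real) \<Rightarrow> ('a \<Rightarrow> 'b \<Rightarrow> real) \<Rightarrow> 'b measure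
    \<Rightarrow> ('b \<Rightarrow> real) \<Rightarrow> nat \<Rightarrow> (nat \<Rightarrow> 'a) \<Rightarrow> nat \<Rightarrow> real" where
  "postK pri k mu q0 n x s =
     (LINT \<alpha>:{0<..}|lborel. pri \<alpha> * likK k mu q0 n x s \<alpha>) / evidence pri k mu q0 n x"

definition post_alpha :: "(real \<Rightarrow> real) \<Rightarrow> ('a \<Rightarrow> 'b \<Rightarrow> real) \<Rightarrow> 'b measure
    \<Rightarrow> ('b \<Rightarrow> real) \<Rightarrow> nat \<Rightarrow> (nat \<Rightarrow> 'a) \<Rightarrow> real measure" where
  "post_alpha pri k mu q0 n x = density lborel
     (\<lambda>\<alpha>. ennreal (indicator {0<..} \<alpha> * pri \<alpha> * lik k mu q0 n x \<alpha>
                      / evidence pri k mu q0 n x))"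

definition mixture :: "'a measure \<Rightarrow> nat \<Rightarrow> (nat \<Rightarrow> real) \<Rightarrow> (nat \<Rightarrow> 'a measure) \<Rightarrow> 'a measure" where
  "mixture nu t p R = measure_of (space nu) (sets nu)
     (\<lambda>A. \<Sum>j<t. ennreal (p j) * emeasure (R j) A)"

definition tendsto_in_prob :: "'w measure \<Rightarrow> (nat \<Rightarrow> 'w \<Rightarrow> real) \<Rightarrow> real \<Rightarrow> bool" where
  "tendsto_in_prob M Y c \<longleftrightarrow>
     (\<forall>e>0. (\<lambda>n. measure M {\<omega>\<in>space M. e < \<bar>Y n \<omega> - c\<bar>}) \<longlonglongrightarrow> 0)"

definition weak_conv_delta0_in_prob :: "'w measure \<Rightarrow> (nat \<Rightarrow> 'w \<Rightarrow> real measure) \<Rightarrow> bool" where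
  "weak_conv_delta0_in_prob M Q \<longleftrightarrow>
     (\<forall>f::real \<Rightarrow> real. continuous_on UNIV f \<and> bounded (range f) \<longrightarrow>
        tendsto_in_prob M (\<lambda>n \<omega>. \<integral>\<alpha>. f \<alpha> \<partial>(Q n \<omega>)) (f 0))"

end

(*
  Summing over partitions, the posterior of the concentration parameter is a mixture over s of
  the conditional posteriors given K_n = s, with density proportional to pi(alpha) times
  alpha^s / alpha^(n), weighted by pr(K_n = s | X_{1:n}). As the weight of s = t tends to 1
  in probability, it suffices that the conditional posterior given K_n = t converges to the
  point mass at 0, and this is deterministic: writing alpha^(n) = alpha^(t) (alpha + t)^(n - t),
  the factor alpha^t / alpha^(n) is at most 1 / (eta + t)^(n - t) for alpha >= eta, and at least
  alpha^(t - 1) / (a + 1)^(n - 1) for alpha <= a. For a < eta the quotient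
  (a + t)^(m) / (eta + t)^(m) of rising factorials tends to 0, and (A2) gives the interval (0, a]
  positive prior mass, so the conditional posterior puts vanishing mass on [eta, oo).
*)
theory Submission
  imports Defs
begin

section \<open>Rising factorials\<close>

lemma pochhammer_mono:
  fixes x y :: real
  assumes "0 \<le> x" "x \<le> y"
  shows "pochhammer x m \<le> pochhammer y m"
  unfolding pochhammer_prod using assms by (intro prod_mono) auto

lemma power_le_pochhammer:
  fixes x :: real
  assumes "0 \<le> x"
  shows "x ^ m \<le> pochhammer x m"
proof -
  have "x ^ m = (\<Prod>i<m. x)" by simp
  also have "\<dots> \<le> pochhammer x m"
    unfolding pochhammer_prod atLeast0LessThan using assms by (intro prod_mono) auto
  finally show ?thesis .
qed

lemma one_le_pochhammer:
  fixes x :: real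
  assumes "1 \<le> x"
  shows "1 \<le> pochhammer x m"
  unfolding pochhammer_prod using assms by (intro prod_ge_1) auto

lemma pochhammer_ratio_tendsto_zero:
  fixes a b :: real
  assumes "0 < a" "a < b"
  shows "(\<lambda>m. pochhammer a m / pochhammer b m) \<longlonglongrightarrow> 0"
proof -
  define c where "c = (b - a) / (b + 1)"
  have c: "0 < c" using assms by (simp add: c_def)
  have step: "(a + real j) / (b + real j) \<le> exp (- (c * inverse (real (Suc j))))" for j
  proof -
    have "c * inverse (real (Suc j)) = (b - a) / ((b + 1) * (real j + 1))"
      by (simp add: c_def field_simps)
    also have "\<dots> \<le> (b - a) / (b + real j)"
    proof (rule divide_left_mono)
      show "b + real j \<le> (b + 1) * (real j + 1)" using assms by (simp add: algebra_simps)
      show "0 < (b + 1) * (real j + 1) * (b + real j)" using assms by (simp add: zero_less_mult_iff)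
    qed (use assms in simp)
    finally have "c * inverse (real (Suc j)) \<le> (b - a) / (b + real j)" .
    moreover have "(a + real j) / (b + real j) = 1 + - ((b - a) / (b + real j))"
      using assms by (simp add: field_simps)
    ultimately show ?thesis
      using exp_ge_add_one_self[of "- ((b - a) / (b + real j))"] by (smt (verit) exp_le_cancel_iff)
  qed
  have upper: "pochhammer a m / pochhammer b m \<le> exp (- (c * harm m))" for m
  proof -
    have "pochhammer a m / pochhammer b m = (\<Prod>j<m. (a + real j) / (b + real j))"
      unfolding pochhammer_prod prod_dividef by (simp add: atLeast0LessThan)
    also have "\<dots> \<le> (\<Prod>j<m. exp (- (c * inverse (real (Suc j)))))"
      using assms step by (intro prod_mono) auto
    also have "\<dots> = exp (- (c * harm m))"
      by (simp add: harm_altdef exp_sum[symmetric] sum_negf sum_distrib_left)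
    finally show ?thesis .
  qed
  have "filterlim (\<lambda>m. c * harm m) at_top sequentially"
    by (rule filterlim_tendsto_pos_mult_at_top[OF tendsto_const c harm_at_top])
  then have lim: "(\<lambda>m. exp (- (c * harm m))) \<longlonglongrightarrow> 0"
    by (auto intro: filterlim_compose[OF exp_at_bot] simp: filterlim_uminus_at_top)
  have lower: "0 \<le> pochhammer a m / pochhammer b m" for m
    using assms by (simp add: pochhammer_nonneg)
  show ?thesis
    by (rule tendsto_sandwich[OF _ _ tendsto_const lim]) (use lower upper in auto)
qed

text \<open>The factor \<open>\<alpha>^s / \<alpha>^(n)\<close> of \<open>likK\<close>, the only place where \<open>\<alpha>\<close> enters the posterior weight
  of \<open>(\<alpha>, K\<^sub>n = s)\<close>.\<close>
definition ewens_factor :: "nat \<Rightarrow> nat \<Rightarrow> real \<Rightarrow> real" where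
  "ewens_factor n s \<alpha> = \<alpha> ^ s / pochhammer \<alpha> n"

lemma borel_measurable_ewens_factor[measurable]: "ewens_factor n s \<in> borel_measurable borel"
  unfolding ewens_factor_def[abs_def] pochhammer_prod by measurable

lemma ewens_factor_nonneg: "0 < \<alpha> \<Longrightarrow> 0 \<le> ewens_factor n s \<alpha>"
  unfolding ewens_factor_def by (simp add: pochhammer_nonneg)

lemma ewens_factor_split:
  assumes "s \<le> n"
  shows "ewens_factor n s \<alpha> = \<alpha> ^ s / pochhammer \<alpha> s / pochhammer (\<alpha> + of_nat s) (n - s)"
  using pochhammer_product'[of \<alpha> s "n - s"] assms by (simp add: ewens_factor_def)

lemma ewens_factor_le_one:
  assumes "1 \<le> s" "s \<le> n" "0 < \<alpha>"
  shows "ewens_factor n s \<alpha> \<le> 1"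
proof -
  have "\<alpha> ^ s / pochhammer \<alpha> s \<le> 1"
    using power_le_pochhammer[of \<alpha> s] pochhammer_pos[of \<alpha> s] assms by simp
  moreover have "1 \<le> pochhammer (\<alpha> + of_nat s) (n - s)"
    using pochhammer_pos[of \<alpha> s] assms by (intro one_le_pochhammer) auto
  ultimately show ?thesis
    unfolding ewens_factor_split[OF assms(2)]
    by (smt (verit) divide_le_eq_1 divide_nonneg_nonneg pochhammer_nonneg zero_le_power assms(3))
qed

lemma ewens_factor_upper:
  assumes "t \<le> n" "0 < \<eta>" "\<eta> \<le> \<alpha>"
  shows "ewens_factor n t \<alpha> \<le> 1 / pochhammer (\<eta> + of_nat t) (n - t)"
proof -
  have p: "0 < pochhammer \<alpha> t" "0 < pochhammer (\<eta> + of_nat t) (n - t)"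
    using assms by (auto intro!: pochhammer_pos)
  have m: "pochhammer (\<eta> + of_nat t) (n - t) \<le> pochhammer (\<alpha> + of_nat t) (n - t)"
    using assms by (intro pochhammer_mono) auto
  have "ewens_factor n t \<alpha> \<le> 1 / pochhammer (\<alpha> + of_nat t) (n - t)"
    unfolding ewens_factor_split[OF assms(1)]
    using power_le_pochhammer[of \<alpha> t] assms p m by (intro divide_right_mono) auto
  also have "\<dots> \<le> 1 / pochhammer (\<eta> + of_nat t) (n - t)"
    using p m by (intro divide_left_mono) auto
  finally show ?thesis .
qed

lemma ewens_factor_lower:
  assumes "1 \<le> t" "t \<le> n" "0 < \<alpha>" "\<alpha> \<le> a"
  shows "\<alpha> ^ (t - 1) / pochhammer (a + 1) (n - 1) \<le> ewens_factor n t \<alpha>"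
proof -
  have "pochhammer \<alpha> n = \<alpha> * pochhammer (\<alpha> + 1) (n - 1)"
    using pochhammer_rec[of \<alpha> "n - 1"] assms by simp
  moreover have "\<alpha> ^ t = \<alpha> * \<alpha> ^ (t - 1)"
    using assms by (simp add: power_eq_if)
  ultimately have "ewens_factor n t \<alpha> = \<alpha> ^ (t - 1) / pochhammer (\<alpha> + 1) (n - 1)"
    unfolding ewens_factor_def using assms by simp
  moreover have "pochhammer (\<alpha> + 1) (n - 1) \<le> pochhammer (a + 1) (n - 1)"
    using assms by (intro pochhammer_mono) auto
  ultimately show ?thesis
    using assms by (simp add: frac_le pochhammer_pos)
qed

section \<open>Weighted means\<close>

lemma weighted_mean_deviation_le:
  fixes f w :: "'a::metric_space \<Rightarrow> real"
  assumes "prob_space M"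
    and f: "f \<in> borel_measurable M" "\<And>x. \<bar>f x\<bar> \<le> B"
    and w: "integrable M w" "AE x in M. 0 \<le> w x"
    and near: "\<And>x. dist x x0 < \<eta> \<Longrightarrow> \<bar>f x - f x0\<bar> \<le> e" "0 \<le> e"
    and tail: "AE x in M. \<eta> \<le> dist x x0 \<longrightarrow> w x \<le> b" "0 \<le> b"
  shows "\<bar>(\<integral>x. w x * f x \<partial>M) - f x0 * (\<integral>x. w x \<partial>M)\<bar> \<le> e * (\<integral>x. w x \<partial>M) + 2 * B * b"
proof -
  interpret prob_space M by fact
  have B: "0 \<le> B" using f(2)[of x0] by linarith
  have dev: "\<bar>f x - f x0\<bar> \<le> 2 * B" for x using f(2)[of x] f(2)[of x0] by linarith
  have int_wf: "integrable M (\<lambda>x. w x * (f x - f x0))"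
  proof (rule Bochner_Integration.integrable_bound)
    show "integrable M (\<lambda>x. 2 * B * w x)" using w(1) by simp
    show "(\<lambda>x. w x * (f x - f x0)) \<in> borel_measurable M"
      using borel_measurable_integrable[OF w(1)] f(1) by measurable
    show "AE x in M. norm (w x * (f x - f x0)) \<le> norm (2 * B * w x)"
      using w(2) by eventually_elim (use dev B in \<open>auto simp: abs_mult mult.commute intro: mult_left_mono\<close>)
  qed
  have "(\<integral>x. w x * f x \<partial>M) - f x0 * (\<integral>x. w x \<partial>M) = (\<integral>x. w x * (f x - f x0) \<partial>M)"
  proof -
    have "integrable M (\<lambda>x. w x * f x)"
      using Bochner_Integration.integrable_add[OF int_wf integrable_mult_left[OF w(1), of "f x0"]]
      by (simp add: algebra_simps)
    then show ?thesis
      using w(1) by (simp add: right_diff_distrib Bochner_Integration.integral_diff mult.commute)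
  qed
  also have "\<bar>\<dots>\<bar> \<le> (\<integral>x. \<bar>w x * (f x - f x0)\<bar> \<partial>M)"
    using integral_norm_bound[of M "\<lambda>x. w x * (f x - f x0)"] by simp
  also have "\<dots> \<le> (\<integral>x. e * w x + 2 * B * b \<partial>M)"
  proof (rule integral_mono_AE')
    show "integrable M (\<lambda>x. e * w x + 2 * B * b)" using w(1) by simp
    show "AE x in M. \<bar>w x * (f x - f x0)\<bar> \<le> e * w x + 2 * B * b"
      using w(2) tail(1)
    proof eventually_elim
      case (elim x)
      show ?case
      proof (cases "dist x x0 < \<eta>")
        case True
        then have "\<bar>w x * (f x - f x0)\<bar> \<le> w x * e"
          using near(1) elim(1) by (simp add: abs_mult mult_left_mono)
        moreover have "0 \<le> 2 * B * b" using B tail(2) by simp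
        ultimately show ?thesis by (simp add: mult.commute[of e])
      next
        case False
        then have "\<bar>w x * (f x - f x0)\<bar> \<le> b * (2 * B)"
          using elim dev[of x] by (simp add: abs_mult mult_mono)
        moreover have "0 \<le> e * w x" using near(2) elim(1) by simp
        ultimately show ?thesis by (simp add: mult.commute)
      qed
    qed
    show "AE x in M. 0 \<le> e * w x + 2 * B * b"
      using w(2) by eventually_elim (use near(2) B tail(2) in simp)
  qed
  also have "\<dots> = e * (\<integral>x. w x \<partial>M) + 2 * B * b"
    using w(1) by (simp add: Bochner_Integration.integral_add prob_space)
  finally show ?thesis .
qed

lemma concentrating_weighted_mean_tendsto:
  fixes f :: "'a::metric_space \<Rightarrow> real" and w :: "nat \<Rightarrow> 'a \<Rightarrow> real"
  assumes M: "prob_space M"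
    and f: "f \<in> borel_measurable M" "\<And>x. \<bar>f x\<bar> \<le> B" "isCont f x0"
    and w: "\<forall>\<^sub>F n in sequentially. integrable M (w n) \<and> (AE x in M. 0 \<le> w n x) \<and>
              0 < (\<integral>x. w n x \<partial>M)"
    and w_tail: "\<And>\<eta>. 0 < \<eta> \<Longrightarrow> \<exists>b. (\<forall>\<^sub>F n in sequentially.
                  0 \<le> b n \<and> (AE x in M. \<eta> \<le> dist x x0 \<longrightarrow> w n x \<le> b n)) \<and>
                  (\<lambda>n. b n / (\<integral>x. w n x \<partial>M)) \<longlonglongrightarrow> 0"
  shows "(\<lambda>n. (\<integral>x. w n x * f x \<partial>M) / (\<integral>x. w n x \<partial>M)) \<longlonglongrightarrow> f x0"
proof (rule tendstoI)
  fix e :: real assume "0 < e"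
  then obtain \<eta> where "0 < \<eta>" and near: "\<And>x. dist x x0 < \<eta> \<Longrightarrow> \<bar>f x - f x0\<bar> \<le> e / 2"
    using f(3) unfolding continuous_at_eps_delta dist_real_def
    by (metis half_gt_zero less_eq_real_def)
  obtain b where b: "\<forall>\<^sub>F n in sequentially. 0 \<le> b n \<and> (AE x in M. \<eta> \<le> dist x x0 \<longrightarrow> w n x \<le> b n)"
    and b_lim: "(\<lambda>n. b n / (\<integral>x. w n x \<partial>M)) \<longlonglongrightarrow> 0"
    using w_tail[OF \<open>0 < \<eta>\<close>] by blast
  have "(\<lambda>n. 2 * B * (b n / (\<integral>x. w n x \<partial>M))) \<longlonglongrightarrow> 0"
    using tendsto_mult_right_zero[OF b_lim] .
  then have small: "\<forall>\<^sub>F n in sequentially. 2 * B * (b n / (\<integral>x. w n x \<partial>M)) < e / 2"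
    using \<open>0 < e\<close> by (intro order_tendstoD(2)) auto
  show "\<forall>\<^sub>F n in sequentially.
      dist ((\<integral>x. w n x * f x \<partial>M) / (\<integral>x. w n x \<partial>M)) (f x0) < e"
    using w b small
  proof eventually_elim
    case (elim n)
    define W where "W = (\<integral>x. w n x \<partial>M)"
    have "W > 0" using elim(1) by (simp add: W_def)
    have "(\<integral>x. w n x * f x \<partial>M) / W - f x0 = ((\<integral>x. w n x * f x \<partial>M) - f x0 * W) / W"
      using \<open>W > 0\<close> by (simp add: diff_divide_distrib)
    then have "\<bar>(\<integral>x. w n x * f x \<partial>M) / W - f x0\<bar> = \<bar>(\<integral>x. w n x * f x \<partial>M) - f x0 * W\<bar> / W"
      using \<open>W > 0\<close> by simp
    also have "\<dots> \<le> (e / 2 * W + 2 * B * b n) / W"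
      unfolding W_def using elim \<open>0 < e\<close>
      by (intro divide_right_mono weighted_mean_deviation_le[OF M f(1,2) _ _ near]) auto
    also have "\<dots> = e / 2 + 2 * B * (b n / W)"
      using \<open>W > 0\<close> by (simp add: add_divide_distrib)
    finally show ?case using elim(3) unfolding W_def dist_real_def by linarith
  qed
qed

lemma abs_integral_mult_le:
  fixes w f :: "'a \<Rightarrow> real"
  assumes "integrable M w" "AE x in M. 0 \<le> w x" "\<And>x. \<bar>f x\<bar> \<le> B"
  shows "\<bar>\<integral>x. w x * f x \<partial>M\<bar> \<le> B * (\<integral>x. w x \<partial>M)"
proof -
  have "0 \<le> B" using assms(3)[of undefined] by linarith
  have "\<bar>\<integral>x. w x * f x \<partial>M\<bar> \<le> (\<integral>x. \<bar>w x * f x\<bar> \<partial>M)"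
    using integral_norm_bound[of M "\<lambda>x. w x * f x"] by simp
  also have "\<dots> \<le> (\<integral>x. B * w x \<partial>M)"
  proof (rule integral_mono_AE')
    show "integrable M (\<lambda>x. B * w x)" using assms(1) by simp
    show "AE x in M. \<bar>w x * f x\<bar> \<le> B * w x"
      using assms(2)
    proof eventually_elim
      case (elim x)
      then have "w x * \<bar>f x\<bar> \<le> w x * B" using assms(3) by (intro mult_left_mono) auto
      then show ?case using elim by (simp add: abs_mult mult.commute)
    qed
    show "AE x in M. 0 \<le> B * w x"
      using assms(2) by eventually_elim (use \<open>0 \<le> B\<close> in simp)
  qed
  finally show ?thesis by simp
qed

text \<open>The quotient on the left is the mixture of the means \<open>J s / I s\<close> with weights
  \<open>c s * I s / (\<Sum>s\<in>S. c s * I s)\<close>.\<close>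
lemma mixture_mean_deviation_le:
  fixes c I J :: "'i \<Rightarrow> real"
  assumes "finite S" "t \<in> S"
    and nonneg: "\<And>s. s \<in> S \<Longrightarrow> 0 \<le> c s" "\<And>s. s \<in> S \<Longrightarrow> 0 \<le> I s"
    and bounded: "\<And>s. s \<in> S \<Longrightarrow> \<bar>J s\<bar> \<le> B * I s" "\<bar>f0\<bar> \<le> B"
  shows "\<bar>(\<Sum>s\<in>S. c s * J s) / (\<Sum>s\<in>S. c s * I s) - f0\<bar>
           \<le> \<bar>J t / I t - f0\<bar> + 2 * B * \<bar>c t * I t / (\<Sum>s\<in>S. c s * I s) - 1\<bar>"
proof -
  define E where "E = (\<Sum>s\<in>S. c s * I s)"
  define D where "D = \<bar>J t / I t - f0\<bar>"
  have "0 \<le> B" using bounded(2) by linarith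
  have "0 \<le> D" by (simp add: D_def)
  have dev: "\<bar>J s - f0 * I s\<bar> \<le> 2 * B * I s" if "s \<in> S" for s
  proof -
    have "\<bar>f0 * I s\<bar> \<le> B * I s"
      using mult_right_mono[OF bounded(2) nonneg(2)[OF that]] nonneg(2)[OF that] by (simp add: abs_mult)
    then show ?thesis using bounded(1)[OF that] abs_triangle_ineq4[of "J s" "f0 * I s"] by linarith
  qed
  have dev_t: "\<bar>J t - f0 * I t\<bar> \<le> I t * D"
  proof (cases "I t = 0")
    case True then show ?thesis using dev[OF assms(2)] by simp
  next
    case False
    then have "J t - f0 * I t = I t * (J t / I t - f0)" by (simp add: field_simps)
    then show ?thesis using nonneg(2)[OF assms(2)] by (simp add: D_def abs_mult)
  qed
  show ?thesis
  proof (cases "E = 0")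
    case True
    then show ?thesis using bounded(2) \<open>0 \<le> B\<close> \<open>0 \<le> D\<close> unfolding E_def[symmetric] D_def[symmetric] by simp
  next
    case False
    moreover have "0 \<le> E" unfolding E_def using nonneg by (intro sum_nonneg mult_nonneg_nonneg) auto
    ultimately have "0 < E" by simp
    have ct: "0 \<le> c t * I t" "c t * I t \<le> E"
      using nonneg assms(2) unfolding E_def by (auto intro!: member_le_sum[OF assms(2)] assms(1))
    have "\<bar>(\<Sum>s\<in>S. c s * J s) - f0 * E\<bar> = \<bar>\<Sum>s\<in>S. c s * (J s - f0 * I s)\<bar>"
      unfolding E_def by (simp add: sum_distrib_left sum_subtractf algebra_simps)
    also have "\<dots> \<le> (\<Sum>s\<in>S. c s * \<bar>J s - f0 * I s\<bar>)"
      using nonneg(1) sum_abs[of "\<lambda>s. c s * (J s - f0 * I s)" S] by (simp add: abs_mult)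
    also have "\<dots> = c t * \<bar>J t - f0 * I t\<bar> + (\<Sum>s\<in>S - {t}. c s * \<bar>J s - f0 * I s\<bar>)"
      by (rule sum.remove[OF assms(1,2)])
    also have "\<dots> \<le> c t * I t * D + (\<Sum>s\<in>S - {t}. 2 * B * (c s * I s))"
    proof (intro add_mono sum_mono)
      show "c t * \<bar>J t - f0 * I t\<bar> \<le> c t * I t * D"
        using mult_left_mono[OF dev_t nonneg(1)[OF assms(2)]] by (simp add: mult.assoc)
      fix s assume "s \<in> S - {t}"
      then show "c s * \<bar>J s - f0 * I s\<bar> \<le> 2 * B * (c s * I s)"
        using mult_left_mono[OF dev nonneg(1)] by (simp add: mult_ac)
    qed
    also have "\<dots> = c t * I t * D + 2 * B * (E - c t * I t)"
      unfolding E_def by (simp add: sum_distrib_left sum.remove[OF assms(1,2)])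
    finally have num: "\<bar>(\<Sum>s\<in>S. c s * J s) - f0 * E\<bar> \<le> c t * I t * D + 2 * B * (E - c t * I t)" .
    define p where "p = c t * I t / E"
    have p: "0 \<le> p" "p \<le> 1" unfolding p_def using ct \<open>0 < E\<close> by auto
    have "\<bar>(\<Sum>s\<in>S. c s * J s) / E - f0\<bar> = \<bar>(\<Sum>s\<in>S. c s * J s) - f0 * E\<bar> / E"
      using \<open>0 < E\<close> by (simp add: field_simps)
    also have "\<dots> \<le> (c t * I t * D + 2 * B * (E - c t * I t)) / E"
      using num \<open>0 < E\<close> by (intro divide_right_mono) auto
    also have "\<dots> = p * D + 2 * B * (1 - p)"
      unfolding p_def using \<open>0 < E\<close> by (simp add: field_simps)
    also have "\<dots> \<le> D + 2 * B * \<bar>p - 1\<bar>"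
      using p \<open>0 \<le> B\<close> \<open>0 \<le> D\<close> mult_right_mono[of p 1 D] by (simp add: abs_if)
    finally show ?thesis unfolding E_def[symmetric] D_def[symmetric] p_def .
  qed
qed

lemma tendsto_in_prob_by_bound:
  assumes "prob_space M"
    and Z: "\<And>n. Z n \<in> borel_measurable M" "tendsto_in_prob M Z z"
    and d: "d \<longlonglongrightarrow> 0" and "0 < C"
    and bound: "\<forall>\<^sub>F n in sequentially. \<forall>\<omega>\<in>space M. \<bar>Y n \<omega> - y\<bar> \<le> d n + C * \<bar>Z n \<omega> - z\<bar>"
  shows "tendsto_in_prob M Y y"
  unfolding tendsto_in_prob_def
proof (intro allI impI)
  fix e :: real assume "0 < e"
  interpret prob_space M by fact
  define bad where "bad n = {\<omega>\<in>space M. e / (2 * C) < \<bar>Z n \<omega> - z\<bar>}" for n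
  have bad_sets: "bad n \<in> sets M" for n
    unfolding bad_def using Z(1) by measurable
  have lim: "(\<lambda>n. measure M (bad n)) \<longlonglongrightarrow> 0"
    using Z(2) \<open>0 < e\<close> \<open>0 < C\<close> unfolding tendsto_in_prob_def bad_def by simp
  have "\<forall>\<^sub>F n in sequentially. d n < e / 2"
    using d \<open>0 < e\<close> by (intro order_tendstoD(2)) auto
  then have "\<forall>\<^sub>F n in sequentially. {\<omega>\<in>space M. e < \<bar>Y n \<omega> - y\<bar>} \<subseteq> bad n"
    using bound
  proof eventually_elim
    case (elim n)
    show ?case
    proof safe
      fix \<omega> assume "\<omega> \<in> space M" "e < \<bar>Y n \<omega> - y\<bar>"
      then have "e / 2 < C * \<bar>Z n \<omega> - z\<bar>" using elim by fastforce
      then show "\<omega> \<in> bad n"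
        using \<open>\<omega> \<in> space M\<close> \<open>0 < C\<close> unfolding bad_def by (simp add: field_simps)
    qed
  qed
  then have upper: "\<forall>\<^sub>F n in sequentially. measure M {\<omega>\<in>space M. e < \<bar>Y n \<omega> - y\<bar>} \<le> measure M (bad n)"
    by eventually_elim (rule finite_measure_mono[OF _ bad_sets])
  show "(\<lambda>n. measure M {\<omega>\<in>space M. e < \<bar>Y n \<omega> - y\<bar>}) \<longlonglongrightarrow> 0"
    by (rule tendsto_sandwich[OF _ upper tendsto_const lim]) simp
qed

section \<open>The prior on the concentration parameter\<close>

locale concentration_prior =
  fixes pri :: "real \<Rightarrow> real"
  assumes pri_measurable[measurable]: "pri \<in> borel_measurable borel"
    and pri_nonneg: "\<And>\<alpha>. 0 < \<alpha> \<Longrightarrow> 0 \<le> pri \<alpha>"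
    and pri_integrable: "set_integrable lborel {0<..} pri"
    and pri_integral: "(LINT \<alpha>:{0<..}|lborel. pri \<alpha>) = 1"
begin

definition prior :: "real measure" where
  "prior = density lborel (\<lambda>\<alpha>. ennreal (indicator {0<..} \<alpha> * pri \<alpha>))"

lemma sets_prior[measurable_cong]: "sets prior = sets borel"
  by (simp add: prior_def)

lemma prior_density_nonneg: "0 \<le> indicator {0<..} \<alpha> * pri \<alpha>"
  using pri_nonneg[of \<alpha>] by (simp add: indicator_def)

lemma integral_prior:
  assumes [measurable]: "g \<in> borel_measurable borel"
  shows "(\<integral>\<alpha>. g \<alpha> \<partial>prior) = (LINT \<alpha>:{0<..}|lborel. pri \<alpha> * g \<alpha>)"
  unfolding prior_def set_lebesgue_integral_def
  by (subst integral_density) (auto intro!: AE_I2 simp: prior_density_nonneg, simp add: mult_ac)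

lemma prob_space_prior: "prob_space prior"
proof
  have "emeasure prior (space prior) = (\<integral>\<^sup>+\<alpha>. ennreal (indicator {0<..} \<alpha> * pri \<alpha>) \<partial>lborel)"
    by (simp add: prior_def emeasure_density)
  also have "\<dots> = ennreal (LINT \<alpha>:{0<..}|lborel. pri \<alpha>)"
    using pri_integrable unfolding set_integrable_def set_lebesgue_integral_def
    by (subst nn_integral_eq_integral) (auto simp: prior_density_nonneg)
  finally show "emeasure prior (space prior) = 1"
    by (simp add: pri_integral)
qed

sublocale prior: prob_space prior
  by (rule prob_space_prior)

lemma AE_prior_pos: "AE \<alpha> in prior. 0 < \<alpha>"
  unfolding prior_def by (subst AE_density) (auto simp: indicator_def)

lemma AE_ewens_factor_nonneg: "AE \<alpha> in prior. 0 \<le> ewens_factor n s \<alpha>"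
  using AE_prior_pos by eventually_elim (rule ewens_factor_nonneg)

lemma integrable_prior_bounded:
  fixes K :: real
  assumes "g \<in> borel_measurable borel" "\<And>\<alpha>. 0 < \<alpha> \<Longrightarrow> \<bar>g \<alpha>\<bar> \<le> K"
  shows "integrable prior g"
  using AE_prior_pos assms
  by (intro prior.integrable_const_bound[of _ K]) (auto elim!: eventually_mono)

lemma integrable_ewens_factor:
  assumes "1 \<le> s" "s \<le> n"
  shows "integrable prior (ewens_factor n s)"
  using assms ewens_factor_nonneg ewens_factor_le_one
  by (intro integrable_prior_bounded[of _ 1]) auto

lemma integral_prior_near_zero_pos:
  assumes "0 < \<epsilon>" "\<And>\<alpha>. 0 < \<alpha> \<Longrightarrow> \<alpha> < \<epsilon> \<Longrightarrow> 0 < pri \<alpha>" "0 < a"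
  shows "0 < (\<integral>\<alpha>. indicator {0<..a} \<alpha> * \<alpha> ^ m \<partial>prior)"
proof -
  define g where "g \<alpha> = indicator {0<..a} \<alpha> * \<alpha> ^ m" for \<alpha> :: real
  have g_int: "integrable prior g"
    unfolding g_def using assms(3)
    by (intro integrable_prior_bounded[of _ "a ^ m"]) (auto simp: indicator_def power_mono)
  have g_nonneg: "AE \<alpha> in prior. 0 \<le> g \<alpha>"
    using AE_prior_pos by eventually_elim (simp add: g_def)
  have "(\<integral>\<alpha>. g \<alpha> \<partial>prior) \<noteq> 0"
  proof
    assume "(\<integral>\<alpha>. g \<alpha> \<partial>prior) = 0"
    then have "AE \<alpha> in prior. g \<alpha> = 0"
      using integral_nonneg_eq_0_iff_AE[OF g_int g_nonneg] by simp
    then have "AE \<alpha> in lborel. 0 < indicator {0<..} \<alpha> * pri \<alpha> \<longrightarrow> g \<alpha> = 0"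
      unfolding prior_def by (subst (asm) AE_density) auto
    then have "AE \<alpha> in lborel. \<alpha> \<notin> {0<..<min a \<epsilon>}"
      by eventually_elim (use assms in \<open>auto simp: g_def\<close>)
    then have "emeasure lborel {0<..<min a \<epsilon>} = 0"
      by (subst (asm) AE_iff_measurable[of "{0<..<min a \<epsilon>}"]) auto
    then show False using assms by simp
  qed
  moreover have "0 \<le> (\<integral>\<alpha>. g \<alpha> \<partial>prior)"
    using g_nonneg by (rule integral_nonneg_AE)
  ultimately show ?thesis by (simp add: g_def)
qed

lemma integral_ewens_factor_lower:
  assumes "1 \<le> t" "t \<le> n" "0 < a"
  shows "(\<integral>\<alpha>. indicator {0<..a} \<alpha> * \<alpha> ^ (t - 1) \<partial>prior) / pochhammer (a + 1) (n - 1)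
           \<le> (\<integral>\<alpha>. ewens_factor n t \<alpha> \<partial>prior)"
proof -
  have "(\<integral>\<alpha>. indicator {0<..a} \<alpha> * \<alpha> ^ (t - 1) \<partial>prior) / pochhammer (a + 1) (n - 1)
      = (\<integral>\<alpha>. indicator {0<..a} \<alpha> * \<alpha> ^ (t - 1) / pochhammer (a + 1) (n - 1) \<partial>prior)"
    by simp
  also have "\<dots> \<le> (\<integral>\<alpha>. ewens_factor n t \<alpha> \<partial>prior)"
  proof (rule integral_mono_AE')
    show "integrable prior (ewens_factor n t)"
      using assms(1,2) by (rule integrable_ewens_factor)
    show "AE \<alpha> in prior. indicator {0<..a} \<alpha> * \<alpha> ^ (t - 1) / pochhammer (a + 1) (n - 1)
        \<le> ewens_factor n t \<alpha>"
      using AE_prior_pos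
      by eventually_elim (use assms ewens_factor_lower ewens_factor_nonneg in \<open>auto simp: indicator_def\<close>)
    show "AE \<alpha> in prior. 0 \<le> ewens_factor n t \<alpha>"
      by (rule AE_ewens_factor_nonneg)
  qed
  finally show ?thesis .
qed

lemma ewens_factor_tail_ratio_tendsto_zero:
  assumes "0 < \<epsilon>" "\<And>\<alpha>. 0 < \<alpha> \<Longrightarrow> \<alpha> < \<epsilon> \<Longrightarrow> 0 < pri \<alpha>" "1 \<le> t" "0 < \<eta>"
  shows "(\<lambda>n. 1 / pochhammer (\<eta> + of_nat t) (n - t) / (\<integral>\<alpha>. ewens_factor n t \<alpha> \<partial>prior))
           \<longlonglongrightarrow> 0"
proof -
  \<comment> \<open>\<open>a < \<eta>\<close> makes the ratio of rising factorials vanish, \<open>a < \<epsilon>\<close> gives \<open>(0, a]\<close> positive prior mass\<close>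
  define a where "a = min \<eta> \<epsilon> / 2"
  have "0 < a" "a < \<eta>" using assms by (auto simp: a_def)
  define C where "C = (\<integral>\<alpha>. indicator {0<..a} \<alpha> * \<alpha> ^ (t - 1) \<partial>prior)"
  have "0 < C" unfolding C_def using assms(1,2) \<open>0 < a\<close> by (rule integral_prior_near_zero_pos)
  define K where "K = pochhammer (a + 1) (t - 1)"
  define Q where "Q m = pochhammer (a + of_nat t) m / pochhammer (\<eta> + of_nat t) m" for m
  have "(\<lambda>n. Q (n - t)) \<longlonglongrightarrow> 0"
    unfolding Q_def using \<open>0 < a\<close> \<open>a < \<eta>\<close>
    by (intro filterlim_compose[OF pochhammer_ratio_tendsto_zero filterlim_minus_const_nat_at_top]) auto
  then have lim: "(\<lambda>n. K / C * Q (n - t)) \<longlonglongrightarrow> 0"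
    by (rule tendsto_mult_right_zero)
  have bound: "1 / pochhammer (\<eta> + of_nat t) (n - t) / (\<integral>\<alpha>. ewens_factor n t \<alpha> \<partial>prior)
      \<in> {0..K / C * Q (n - t)}" if "t \<le> n" for n
  proof -
    define P where "P = pochhammer (\<eta> + of_nat t) (n - t)"
    have "P > 0" unfolding P_def using assms by (simp add: pochhammer_pos)
    have split: "pochhammer (a + 1) (n - 1) = K * pochhammer (a + of_nat t) (n - t)"
      unfolding K_def using pochhammer_product'[of "a + 1" "t - 1" "n - t"] assms(3) that
      by (simp add: of_nat_diff algebra_simps)
    have lower: "C / pochhammer (a + 1) (n - 1) \<le> (\<integral>\<alpha>. ewens_factor n t \<alpha> \<partial>prior)"
      unfolding C_def using assms(3) that \<open>0 < a\<close> by (rule integral_ewens_factor_lower)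
    have "0 < C / pochhammer (a + 1) (n - 1)"
      using \<open>0 < C\<close> \<open>0 < a\<close> by (simp add: pochhammer_pos)
    moreover from this have "0 < (\<integral>\<alpha>. ewens_factor n t \<alpha> \<partial>prior)"
      using lower by linarith
    ultimately have "1 / P / (\<integral>\<alpha>. ewens_factor n t \<alpha> \<partial>prior) \<le> 1 / P / (C / pochhammer (a + 1) (n - 1))"
      using lower \<open>P > 0\<close> by (intro divide_left_mono mult_pos_pos) auto
    also have "\<dots> = K / C * Q (n - t)"
      unfolding split Q_def P_def by simp
    finally show ?thesis
      using \<open>0 < (\<integral>\<alpha>. ewens_factor n t \<alpha> \<partial>prior)\<close>
      using \<open>P > 0\<close> unfolding P_def by simp
  qed
  have "\<forall>\<^sub>F n in sequentially.
      1 / pochhammer (\<eta> + of_nat t) (n - t) / (\<integral>\<alpha>. ewens_factor n t \<alpha> \<partial>prior) \<in> {0..K / C * Q (n - t)}"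
    using eventually_ge_at_top[of t] by eventually_elim (rule bound)
  then show ?thesis
    by (intro tendsto_sandwich[OF _ _ tendsto_const lim]) (simp_all add: eventually_conj_iff)
qed

lemma integral_ewens_factor_pos:
  assumes "0 < \<epsilon>" "\<And>\<alpha>. 0 < \<alpha> \<Longrightarrow> \<alpha> < \<epsilon> \<Longrightarrow> 0 < pri \<alpha>" "1 \<le> t" "t \<le> n"
  shows "0 < (\<integral>\<alpha>. ewens_factor n t \<alpha> \<partial>prior)"
proof -
  have "0 < (\<integral>\<alpha>. indicator {0<..\<epsilon>} \<alpha> * \<alpha> ^ (t - 1) \<partial>prior) / pochhammer (\<epsilon> + 1) (n - 1)"
    using integral_prior_near_zero_pos[OF assms(1,2,1)] assms(1) by (simp add: pochhammer_pos)
  also have "\<dots> \<le> (\<integral>\<alpha>. ewens_factor n t \<alpha> \<partial>prior)"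
    using assms by (intro integral_ewens_factor_lower) auto
  finally show ?thesis .
qed

definition conditional_mean :: "nat \<Rightarrow> nat \<Rightarrow> (real \<Rightarrow> real) \<Rightarrow> real" where
  "conditional_mean n s f =
     (\<integral>\<alpha>. ewens_factor n s \<alpha> * f \<alpha> \<partial>prior) / (\<integral>\<alpha>. ewens_factor n s \<alpha> \<partial>prior)"

lemma conditional_mean_tendsto:
  fixes f :: "real \<Rightarrow> real"
  assumes pri_pos: "0 < \<epsilon>" "\<And>\<alpha>. 0 < \<alpha> \<Longrightarrow> \<alpha> < \<epsilon> \<Longrightarrow> 0 < pri \<alpha>" and "1 \<le> t"
    and f: "f \<in> borel_measurable borel" "\<And>\<alpha>. \<bar>f \<alpha>\<bar> \<le> B" "isCont f 0"
  shows "(\<lambda>n. conditional_mean n t f) \<longlonglongrightarrow> f 0"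
  unfolding conditional_mean_def
proof (rule concentrating_weighted_mean_tendsto[OF prob_space_prior _ f(2,3)])
  show "f \<in> borel_measurable prior"
    using f(1) by simp
  show "\<forall>\<^sub>F n in sequentially. integrable prior (ewens_factor n t) \<and>
      (AE \<alpha> in prior. 0 \<le> ewens_factor n t \<alpha>) \<and> 0 < (\<integral>\<alpha>. ewens_factor n t \<alpha> \<partial>prior)"
    using eventually_ge_at_top[of t]
    by eventually_elim
      (use pri_pos \<open>1 \<le> t\<close> in \<open>auto intro: integrable_ewens_factor integral_ewens_factor_pos
                                          AE_ewens_factor_nonneg\<close>)
  fix \<eta> :: real assume "0 < \<eta>"
  show "\<exists>b. (\<forall>\<^sub>F n in sequentially. 0 \<le> b n \<and>
      (AE \<alpha> in prior. \<eta> \<le> dist \<alpha> 0 \<longrightarrow> ewens_factor n t \<alpha> \<le> b n)) \<and>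
      (\<lambda>n. b n / (\<integral>\<alpha>. ewens_factor n t \<alpha> \<partial>prior)) \<longlonglongrightarrow> 0"
  proof (intro exI conjI)
    show "\<forall>\<^sub>F n in sequentially. 0 \<le> 1 / pochhammer (\<eta> + of_nat t) (n - t) \<and>
        (AE \<alpha> in prior. \<eta> \<le> dist \<alpha> 0 \<longrightarrow> ewens_factor n t \<alpha> \<le> 1 / pochhammer (\<eta> + of_nat t) (n - t))"
      using eventually_ge_at_top[of t]
    proof eventually_elim
      case (elim n)
      show ?case
        using AE_prior_pos \<open>0 < \<eta>\<close> ewens_factor_upper[OF elim \<open>0 < \<eta>\<close>]
        by (auto simp: pochhammer_nonneg dist_real_def elim!: eventually_mono)
    qed
    show "(\<lambda>n. 1 / pochhammer (\<eta> + of_nat t) (n - t) / (\<integral>\<alpha>. ewens_factor n t \<alpha> \<partial>prior)) \<longlonglongrightarrow> 0"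
      using pri_pos \<open>1 \<le> t\<close> \<open>0 < \<eta>\<close> by (rule ewens_factor_tail_ratio_tendsto_zero)
  qed
qed

end

section \<open>The posterior of the concentration parameter\<close>

definition partition_weight :: "('a \<Rightarrow> 'b \<Rightarrow> real) \<Rightarrow> 'b measure \<Rightarrow> ('b \<Rightarrow> real)
    \<Rightarrow> nat \<Rightarrow> (nat \<Rightarrow> 'a) \<Rightarrow> nat \<Rightarrow> real" where
  "partition_weight k mu q0 n x s = (\<Sum>A\<in>tau s n. \<Prod>B\<in>A. fact (card B - 1) * marg k mu q0 x B)"

lemma likK_eq_partition_weight:
  "likK k mu q0 n x s \<alpha> = partition_weight k mu q0 n x s * ewens_factor n s \<alpha>"
  unfolding likK_def partition_weight_def ewens_factor_def by simp

lemma lik_eq_sum_partition_weight: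
  "lik k mu q0 n x \<alpha> = (\<Sum>s=1..n. partition_weight k mu q0 n x s * ewens_factor n s \<alpha>)"
  unfolding lik_def likK_eq_partition_weight ..

lemma partition_weight_nonneg:
  assumes "\<And>x th. x \<in> space nu \<Longrightarrow> th \<in> space mu \<Longrightarrow> 0 \<le> k x th"
    and "\<And>th. th \<in> space mu \<Longrightarrow> 0 \<le> q0 th"
    and "\<And>i. x i \<in> space nu"
  shows "0 \<le> partition_weight k mu q0 n x s"
proof -
  have "0 \<le> marg k mu q0 x B" for B
    unfolding marg_def using assms
    by (intro integral_nonneg_AE AE_I2) (auto intro!: mult_nonneg_nonneg prod_nonneg)
  then show ?thesis
    unfolding partition_weight_def by (auto intro!: sum_nonneg prod_nonneg)
qed

lemma borel_measurable_partition_weight: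
  assumes mu: "sigma_finite_measure mu"
    and k[measurable]: "(\<lambda>(x, th). k x th) \<in> borel_measurable (nu \<Otimes>\<^sub>M mu)"
    and q0[measurable]: "q0 \<in> borel_measurable mu"
    and X[measurable]: "\<And>i. X i \<in> measurable M nu"
  shows "(\<lambda>\<omega>. partition_weight k mu q0 n (\<lambda>i. X i \<omega>) s) \<in> borel_measurable M"
proof -
  have "(\<lambda>(\<omega>, th). k (X i \<omega>) th) \<in> borel_measurable (M \<Otimes>\<^sub>M mu)" for i
    using measurable_compose[OF _ k, of "\<lambda>(\<omega>, th). (X i \<omega>, th)"] by (simp add: case_prod_beta')
  then have "(\<lambda>(\<omega>, th). (\<Prod>i\<in>B. k (X i \<omega>) th) * q0 th) \<in> borel_measurable (M \<Otimes>\<^sub>M mu)" for B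
    by (simp add: case_prod_beta')
  then have [measurable]: "(\<lambda>\<omega>. marg k mu q0 (\<lambda>i. X i \<omega>) B) \<in> borel_measurable M" for B
    unfolding marg_def by (rule sigma_finite_measure.borel_measurable_lebesgue_integral[OF mu])
  show ?thesis
    unfolding partition_weight_def by measurable
qed

context concentration_prior
begin

lemma evidence_eq:
  "evidence pri k mu q0 n x =
     (\<Sum>s=1..n. partition_weight k mu q0 n x s * (\<integral>\<alpha>. ewens_factor n s \<alpha> \<partial>prior))"
proof -
  have "evidence pri k mu q0 n x = (\<integral>\<alpha>. lik k mu q0 n x \<alpha> \<partial>prior)"
    unfolding evidence_def by (rule integral_prior[symmetric]) (simp add: lik_eq_sum_partition_weight)
  also have "\<dots> = (\<Sum>s=1..n. partition_weight k mu q0 n x s * (\<integral>\<alpha>. ewens_factor n s \<alpha> \<partial>prior))"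
    unfolding lik_eq_sum_partition_weight
    by (subst Bochner_Integration.integral_sum) (auto intro: integrable_ewens_factor)
  finally show ?thesis .
qed

lemma postK_eq:
  "postK pri k mu q0 n x t =
     partition_weight k mu q0 n x t * (\<integral>\<alpha>. ewens_factor n t \<alpha> \<partial>prior) / evidence pri k mu q0 n x"
  unfolding postK_def likK_eq_partition_weight integral_prior[symmetric, OF borel_measurable_ewens_factor]
  by (subst integral_prior[symmetric]) auto

lemma integral_post_alpha:
  fixes f :: "real \<Rightarrow> real"
  assumes f[measurable]: "f \<in> borel_measurable borel" "\<And>\<alpha>. \<bar>f \<alpha>\<bar> \<le> B"
    and c_nonneg: "\<And>s. 0 \<le> partition_weight k mu q0 n x s"
  shows "(\<integral>\<alpha>. f \<alpha> \<partial>post_alpha pri k mu q0 n x) =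
     (\<Sum>s=1..n. partition_weight k mu q0 n x s * (\<integral>\<alpha>. ewens_factor n s \<alpha> * f \<alpha> \<partial>prior))
       / evidence pri k mu q0 n x"
proof -
  define E where "E = evidence pri k mu q0 n x"
  have "0 \<le> E"
    unfolding E_def evidence_eq
    by (intro sum_nonneg mult_nonneg_nonneg c_nonneg integral_nonneg_AE AE_ewens_factor_nonneg)
  have lik_nonneg: "0 \<le> lik k mu q0 n x \<alpha>" if "0 < \<alpha>" for \<alpha>
    unfolding lik_eq_sum_partition_weight using that c_nonneg
    by (intro sum_nonneg mult_nonneg_nonneg ewens_factor_nonneg)
  have [measurable]: "lik k mu q0 n x \<in> borel_measurable borel"
    unfolding lik_eq_sum_partition_weight[abs_def] by measurable
  have "(\<integral>\<alpha>. f \<alpha> \<partial>post_alpha pri k mu q0 n x)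
      = (\<integral>\<alpha>. (indicator {0<..} \<alpha> * pri \<alpha> * lik k mu q0 n x \<alpha> / E) *\<^sub>R f \<alpha> \<partial>lborel)"
    unfolding post_alpha_def E_def[symmetric] using \<open>0 \<le> E\<close> lik_nonneg pri_nonneg
    by (intro integral_density) (auto intro!: AE_I2 simp: indicator_def)
  also have "\<dots> = (LINT \<alpha>:{0<..}|lborel. pri \<alpha> * (lik k mu q0 n x \<alpha> * f \<alpha> / E))"
    unfolding set_lebesgue_integral_def by (simp add: mult_ac)
  also have "\<dots> = (\<integral>\<alpha>. lik k mu q0 n x \<alpha> * f \<alpha> \<partial>prior) / E"
    by (subst integral_prior[symmetric]) simp_all
  also have "\<dots> = (\<Sum>s=1..n. partition_weight k mu q0 n x s * (\<integral>\<alpha>. ewens_factor n s \<alpha> * f \<alpha> \<partial>prior)) / E"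
  proof -
    have "integrable prior (\<lambda>\<alpha>. ewens_factor n s \<alpha> * f \<alpha>)" if "s \<in> {1..n}" for s
    proof (rule integrable_prior_bounded[of _ B])
      fix \<alpha> :: real assume "0 < \<alpha>"
      then have "\<bar>ewens_factor n s \<alpha>\<bar> \<le> 1"
        using that ewens_factor_nonneg ewens_factor_le_one by auto
      then show "\<bar>ewens_factor n s \<alpha> * f \<alpha>\<bar> \<le> B"
        using mult_mono[OF _ f(2)[of \<alpha>], of "\<bar>ewens_factor n s \<alpha>\<bar>" 1] by (simp add: abs_mult)
    qed simp
    then show ?thesis
      unfolding lik_eq_sum_partition_weight sum_distrib_right
      by (subst Bochner_Integration.integral_sum) (auto simp: mult.assoc)
  qed
  finally show ?thesis unfolding E_def .
qed

lemma posterior_mean_deviation_le: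
  fixes f :: "real \<Rightarrow> real"
  assumes "1 \<le> t" "t \<le> n"
    and f: "f \<in> borel_measurable borel" "\<And>\<alpha>. \<bar>f \<alpha>\<bar> \<le> B"
    and c_nonneg: "\<And>s. 0 \<le> partition_weight k mu q0 n x s"
  shows "\<bar>(\<integral>\<alpha>. f \<alpha> \<partial>post_alpha pri k mu q0 n x) - f 0\<bar>
           \<le> \<bar>conditional_mean n t f - f 0\<bar> + 2 * B * \<bar>postK pri k mu q0 n x t - 1\<bar>"
  unfolding integral_post_alpha[OF f c_nonneg] evidence_eq postK_eq conditional_mean_def
proof (rule mixture_mean_deviation_le)
  show "0 \<le> (\<integral>\<alpha>. ewens_factor n s \<alpha> \<partial>prior)" for s
    using AE_ewens_factor_nonneg by (rule integral_nonneg_AE)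
  show "\<bar>\<integral>\<alpha>. ewens_factor n s \<alpha> * f \<alpha> \<partial>prior\<bar> \<le> B * (\<integral>\<alpha>. ewens_factor n s \<alpha> \<partial>prior)"
    if "s \<in> {1..n}" for s
    using that by (intro abs_integral_mult_le integrable_ewens_factor AE_ewens_factor_nonneg f(2)) auto
qed (use assms c_nonneg in auto)

end

theorem proposition2:
  fixes M :: "'w measure" and X :: "nat \<Rightarrow> 'w \<Rightarrow> 'a"
    and nu :: "'a measure" and mu :: "'b measure"
    and k :: "'a \<Rightarrow> 'b \<Rightarrow> real" and q0 :: "'b \<Rightarrow> real"
    and pri :: "real \<Rightarrow> real"
    and t :: nat and p :: "nat \<Rightarrow> real" and R :: "nat \<Rightarrow> 'a measure"
  assumes
    \<comment> \<open>kernel density k(.|th) w.r.t. a sigma-finite measure nu on the data space\<close>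
    nu: "sigma_finite_measure nu"
    and mu: "sigma_finite_measure mu"
    and k_meas: "(\<lambda>(x, th). k x th) \<in> borel_measurable (nu \<Otimes>\<^sub>M mu)"
    and k_nonneg: "\<And>x th. x \<in> space nu \<Longrightarrow> th \<in> space mu \<Longrightarrow> 0 \<le> k x th"
    and k_dens: "\<And>th. th \<in> space mu \<Longrightarrow> (\<integral>\<^sup>+ x. ennreal (k x th) \<partial>nu) = 1"
    \<comment> \<open>base probability measure Q0 with density q0 w.r.t. mu\<close>
    and q0_meas: "q0 \<in> borel_measurable mu"
    and q0_nonneg: "\<And>th. th \<in> space mu \<Longrightarrow> 0 \<le> q0 th"
    and q0_dens: "(\<integral>\<^sup>+ th. ennreal (q0 th) \<partial>mu) = 1"
    \<comment> \<open>(A1): prior on alpha in (0,oo) with a Lebesgue density\<close>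
    and pri_meas: "pri \<in> borel_measurable borel"
    and pri_nonneg: "\<And>\<alpha>. 0 < \<alpha> \<Longrightarrow> 0 \<le> pri \<alpha>"
    and pri_int: "set_integrable lborel {0<..} pri"
    and pri_one: "(LINT \<alpha>:{0<..}|lborel. pri \<alpha>) = 1"
    \<comment> \<open>(A2)\<close>
    and A2: "\<exists>\<epsilon> \<delta> \<beta>::real. 0 < \<epsilon> \<and> 0 < \<delta> \<and>
               (\<forall>\<alpha>\<in>{0<..<\<epsilon>}. \<alpha> powr \<beta> / \<delta> \<le> pri \<alpha> \<and> pri \<alpha> \<le> \<delta> * \<alpha> powr \<beta>)"
    \<comment> \<open>finite mixture P = sum_j p_j R_j with distinct components\<close>
    and t_pos: "1 \<le> t"
    and R_prob: "\<And>j. j < t \<Longrightarrow> prob_space (R j)"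
    and R_sets: "\<And>j. j < t \<Longrightarrow> sets (R j) = sets nu"
    and R_distinct: "inj_on R {..<t}"
    and p_range: "\<And>j. j < t \<Longrightarrow> 0 < p j \<and> p j < 1"
    and p_sum: "(\<Sum>j<t. p j) = 1"
    \<comment> \<open>X_1, X_2, ... i.i.d. from P under the probability measure M (= P^(oo))\<close>
    and M: "prob_space M"
    and X_meas: "\<And>i. X i \<in> measurable M nu"
    and X_indep: "prob_space.indep_vars M (\<lambda>_. nu) X UNIV"
    and X_distr: "\<And>i. distr M nu (X i) = mixture nu t p R"
    \<comment> \<open>pr(K_n = t | X_{1:n}) -> 1 in probability\<close>
    and hyp: "tendsto_in_prob M (\<lambda>n \<omega>. postK pri k mu q0 n (\<lambda>i. X i \<omega>) t) 1"
  shows "weak_conv_delta0_in_prob M (\<lambda>n \<omega>. post_alpha pri k mu q0 n (\<lambda>i. X i \<omega>))"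
proof -
  interpret concentration_prior pri
    using pri_meas pri_nonneg pri_int pri_one by unfold_locales
  obtain \<epsilon> where "0 < \<epsilon>" and pri_pos: "\<And>\<alpha>. 0 < \<alpha> \<Longrightarrow> \<alpha> < \<epsilon> \<Longrightarrow> 0 < pri \<alpha>"
    using A2 by (metis divide_pos_pos greaterThanLessThan_iff order_less_le_trans powr_gt_zero
        order_less_irrefl)
  have c_nonneg: "0 \<le> partition_weight k mu q0 n (\<lambda>i. X i \<omega>) s" if "\<omega> \<in> space M" for n s \<omega>
    using k_nonneg q0_nonneg measurable_space[OF X_meas that] by (rule partition_weight_nonneg)
  note [measurable] = borel_measurable_partition_weight[OF mu k_meas q0_meas X_meas]
  have postK_meas: "(\<lambda>\<omega>. postK pri k mu q0 n (\<lambda>i. X i \<omega>) t) \<in> borel_measurable M" for n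
    unfolding postK_eq evidence_eq by measurable
  show ?thesis
    unfolding weak_conv_delta0_in_prob_def
  proof (intro allI impI)
    fix f :: "real \<Rightarrow> real" assume "continuous_on UNIV f \<and> bounded (range f)"
    then obtain B where f: "f \<in> borel_measurable borel" "isCont f 0" "\<And>\<alpha>. \<bar>f \<alpha>\<bar> \<le> B" "0 < B"
      by (metis bounded_pos borel_measurable_continuous_onI continuous_on_eq_continuous_at open_UNIV
          rangeI real_norm_def UNIV_I)
    have cond_mean: "(\<lambda>n. \<bar>conditional_mean n t f - f 0\<bar>) \<longlonglongrightarrow> 0"
      using conditional_mean_tendsto[OF \<open>0 < \<epsilon>\<close> pri_pos t_pos f(1,3,2)]
      by (intro tendsto_rabs_zero LIM_zero)
    have "\<forall>\<^sub>F n in sequentially. \<forall>\<omega>\<in>space M.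
        \<bar>(\<integral>\<alpha>. f \<alpha> \<partial>post_alpha pri k mu q0 n (\<lambda>i. X i \<omega>)) - f 0\<bar>
          \<le> \<bar>conditional_mean n t f - f 0\<bar> + 2 * B * \<bar>postK pri k mu q0 n (\<lambda>i. X i \<omega>) t - 1\<bar>"
      using eventually_ge_at_top[of t]
      by eventually_elim (auto intro!: posterior_mean_deviation_le t_pos f(1,3) c_nonneg)
    then show "tendsto_in_prob M (\<lambda>n \<omega>. \<integral>\<alpha>. f \<alpha> \<partial>post_alpha pri k mu q0 n (\<lambda>i. X i \<omega>)) (f 0)"
      using \<open>0 < B\<close> by (intro tendsto_in_prob_by_bound[OF M postK_meas hyp cond_mean]) auto
  qed
qed

end
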